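(* In the algebra $\mathcal A$, for every $i\in[1,n-1]$, $$\alpha_i(x_i)\,\alpha_i(x_{i+1})=\alpha_i(x_{i+1})\,\alpha_i(x_i).$$
   Context: Let $R=\mathbb Z[\mu_1,\mu_2]$. Fix $n\ge2$. Let $\mathcal A$ be the associative algebra over $R[[x_1,\dots,x_n]]$ generated by $u_1,\dots,u_{n-1}$ subject to: the $x_j$ commute with all $u_i$; $u_iu_j=u_ju_i$ for $|i-j|>1$; $u_iu_{i+1}u_i=u_{i+1}u_iu_{i+1}$; $u_i^2=-\mu_1u_i$; and $\mu_2x_ix_{i+1}u_i=0$ for all $i$. For $i\in[1,n-1]$ and $x\in R[[x_1,\dots,x_n]]$, set $\alpha_i(x)=(1+xu_{n-1})(1+xu_{n-2})\cdots(1+xu_i)$. *)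

theory Defs
  imports Main
begin

definition alpha :: "nat \<Rightarrow> (nat \<Rightarrow> 'a::ring_1) \<Rightarrow> nat \<Rightarrow> 'a \<Rightarrow> 'a" where
  "alpha n u i x = prod_list (map (\<lambda>j. 1 + x * u j) (rev [i..<n]))"

end

theory Submission
  imports Defs
begin

text \<open>Peel off the two outermost factors of both products. The factor \<open>\<alpha>\<^sub>j(c)\<close> commutes past
  \<open>1 + d u\<^sub>j\<^sub>+\<^sub>1\<close> by far commutativity, and the quadratic and braid relations for
  \<open>v = u\<^sub>j\<^sub>+\<^sub>1\<close>, \<open>w = u\<^sub>j\<close> give \<open>(1 + cv)(1 + cw)(1 + dv) = M(c,d) (1 + cw)\<close> with \<open>M\<close> symmetric in
  \<open>c, d\<close>. Hence \<open>\<alpha>\<^sub>j\<^sub>+\<^sub>2(c) \<alpha>\<^sub>j\<^sub>+\<^sub>2(d) = M(c,d) \<alpha>\<^sub>j\<^sub>+\<^sub>1(c) \<alpha>\<^sub>j\<^sub>+\<^sub>1(d)\<close>, and induction on the number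
  of factors finishes.\<close>

definition central :: "'a::times \<Rightarrow> bool" where
  "central c \<longleftrightarrow> (\<forall>y. c * y = y * c)"

lemma central_mult_left_commute:
  fixes c :: "'a::semigroup_mult"
  shows "central c \<Longrightarrow> y * (c * z) = c * (y * z)"
  unfolding central_def by (metis mult.assoc)

lemma prod_list_commute:
  fixes c :: "'a::monoid_mult"
  assumes "\<forall>y\<in>set ys. c * y = y * c"
  shows "c * prod_list ys = prod_list ys * c"
  using assms by (induction ys) (simp_all, metis mult.assoc)

lemma one_plus_mult_commute:
  fixes c d v w :: "'a::ring_1"
  assumes "central c" "central d" "v * w = w * v"
  shows "(1 + c * v) * (1 + d * w) = (1 + d * w) * (1 + c * v)"
proof -
  have "c * v * (d * w) = c * (d * (v * w))"
    by (simp add: mult.assoc central_mult_left_commute[OF \<open>central d\<close>])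
  also have "\<dots> = d * (c * (w * v))"
    using assms(3) central_mult_left_commute[OF \<open>central c\<close>] by metis
  also have "\<dots> = d * w * (c * v)"
    by (simp add: mult.assoc central_mult_left_commute[OF \<open>central c\<close>])
  finally have "c * v * (d * w) = d * w * (c * v)" .
  then show ?thesis by (simp add: algebra_simps)
qed

lemma alpha_self [simp]: "alpha i u i x = 1"
  by (simp add: alpha_def)

lemma alpha_Suc: "i \<le> k \<Longrightarrow> alpha (Suc k) u i x = (1 + x * u k) * alpha k u i x"
  by (simp add: alpha_def)

definition braid_factor :: "'a::ring_1 \<Rightarrow> 'a \<Rightarrow> 'a \<Rightarrow> 'a \<Rightarrow> 'a \<Rightarrow> 'a" where
  "braid_factor m v w c d = 1 + (c + d) * v + c * d * (w * v) - m * c * d * v - c * d * (v * w)"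

lemma braid_factor_commute:
  assumes "central c"
  shows "braid_factor m v w c d = braid_factor m v w d c"
proof -
  have "c * d = d * c"
    using assms by (simp add: central_def)
  then show ?thesis
    unfolding braid_factor_def by (simp add: algebra_simps)
qed

lemma braid_factor_eq:
  fixes c d m v w :: "'a::ring_1"
  assumes cc: "central c" and cd: "central d" and cm: "central m"
    and vv: "v * v = - (m * v)" and ww: "w * w = - (m * w)" and braid: "w * v * w = v * w * v"
  shows "(1 + c * v) * (1 + c * w) * (1 + d * v) = braid_factor m v w c d * (1 + c * w)"
proof -
  have scalars_left: "\<And>y. v * (c * y) = c * (v * y)" "\<And>y. v * (d * y) = d * (v * y)"
      "\<And>y. v * (m * y) = m * (v * y)" "\<And>y. w * (c * y) = c * (w * y)"
      "\<And>y. w * (d * y) = d * (w * y)" "\<And>y. w * (m * y) = m * (w * y)"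
      "\<And>y. d * (c * y) = c * (d * y)" "\<And>y. c * (m * y) = m * (c * y)"
      "\<And>y. d * (m * y) = m * (d * y)"
    using cc cd cm unfolding central_def by (metis mult.assoc)+
  have scalars_commute: "v * c = c * v" "v * d = d * v" "v * m = m * v" "w * c = c * w" "w * d = d * w"
      "w * m = m * w" "d * c = c * d" "c * m = m * c" "d * m = m * d"
    using cc cd cm unfolding central_def by metis+
  have assoc_rels: "\<And>y. v * (v * y) = - (m * (v * y))" "\<And>y. w * (w * y) = - (m * (w * y))"
      "w * (v * w) = v * (w * v)" "\<And>y. w * (v * (w * y)) = v * (w * (v * y))"
    using vv ww braid by (metis mult.assoc mult_minus_left)+
  show ?thesis
    unfolding braid_factor_def
    by (simp add: algebra_simps scalars_left scalars_commute assoc_rels vv ww)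
qed

lemma alpha_Suc_Suc_mult:
  fixes u :: "nat \<Rightarrow> 'a::ring_1"
  assumes cc: "central c" and cd: "central d" and cm: "central m" and "i \<le> j"
    and vv: "u (Suc j) * u (Suc j) = - (m * u (Suc j))" and ww: "u j * u j = - (m * u j)"
    and braid: "u j * u (Suc j) * u j = u (Suc j) * u j * u (Suc j)"
    and far: "\<forall>l\<in>{i..<j}. u (Suc j) * u l = u l * u (Suc j)"
  shows "alpha (Suc (Suc j)) u i c * alpha (Suc (Suc j)) u i d
    = braid_factor m (u (Suc j)) (u j) c d * (alpha (Suc j) u i c * alpha (Suc j) u i d)"
proof -
  have past: "(1 + d * u (Suc j)) * alpha j u i c = alpha j u i c * (1 + d * u (Suc j))"
    unfolding alpha_def
    by (rule prod_list_commute) (use far cc cd in \<open>auto intro: one_plus_mult_commute\<close>)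
  have "alpha (Suc (Suc j)) u i c * alpha (Suc (Suc j)) u i d
      = (1 + c * u (Suc j)) * (1 + c * u j) * (alpha j u i c * (1 + d * u (Suc j)))
        * alpha (Suc j) u i d"
    using \<open>i \<le> j\<close> by (simp add: alpha_Suc mult.assoc)
  also have "\<dots> = (1 + c * u (Suc j)) * (1 + c * u j) * (1 + d * u (Suc j))
        * (alpha j u i c * alpha (Suc j) u i d)"
    by (metis past mult.assoc)
  also have "\<dots> = braid_factor m (u (Suc j)) (u j) c d * (1 + c * u j)
        * (alpha j u i c * alpha (Suc j) u i d)"
    using braid_factor_eq[OF cc cd cm vv ww braid] by simp
  also have "\<dots> = braid_factor m (u (Suc j)) (u j) c d * (alpha (Suc j) u i c * alpha (Suc j) u i d)"
    using \<open>i \<le> j\<close> by (simp add: alpha_Suc mult.assoc)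
  finally show ?thesis .
qed

lemma alpha_commute:
  fixes u :: "nat \<Rightarrow> 'a::ring_1"
  assumes ca: "central a" and cb: "central b" and cm: "central m" and "i \<le> k"
    and quad: "\<forall>l\<in>{i..<k}. u l * u l = - (m * u l)"
    and far: "\<forall>l\<in>{i..<k}. \<forall>l'\<in>{i..<k}. l + 1 < l' \<longrightarrow> u l' * u l = u l * u l'"
    and braid: "\<forall>l. i \<le> l \<and> Suc l < k \<longrightarrow> u l * u (Suc l) * u l = u (Suc l) * u l * u (Suc l)"
  shows "alpha k u i a * alpha k u i b = alpha k u i b * alpha k u i a"
  using assms(4-)
proof (induction k)
  case 0
  then show ?case by simp
next
  case (Suc k)
  consider "i = Suc k" | "i = k" | j where "k = Suc j" "i \<le> j"
    using Suc.prems(1) by (cases k) (auto simp: le_Suc_eq)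
  then show ?case
  proof cases
    case 1
    then show ?thesis by simp
  next
    case 2
    then show ?thesis
      using one_plus_mult_commute[OF ca cb refl] by (simp add: alpha_Suc)
  next
    case 3
    note quad = Suc.prems(2) and far = Suc.prems(3) and braid = Suc.prems(4)
    have IH: "alpha k u i a * alpha k u i b = alpha k u i b * alpha k u i a"
      using Suc.IH 3 quad far braid by auto
    have quad_k: "u (Suc j) * u (Suc j) = - (m * u (Suc j))"
      using quad 3 by simp
    have quad_j: "u j * u j = - (m * u j)"
      using quad 3 by simp
    have braid_j: "u j * u (Suc j) * u j = u (Suc j) * u j * u (Suc j)"
      using braid 3 by simp
    have far_k: "\<forall>l\<in>{i..<j}. u (Suc j) * u l = u l * u (Suc j)"
      using far 3 by simp
    have step: "alpha (Suc k) u i c * alpha (Suc k) u i d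
        = braid_factor m (u k) (u j) c d * (alpha k u i c * alpha k u i d)"
      if "central c" "central d" for c d
      unfolding \<open>k = Suc j\<close>
      by (rule alpha_Suc_Suc_mult[OF that cm \<open>i \<le> j\<close> quad_k quad_j braid_j far_k])
    have "alpha (Suc k) u i a * alpha (Suc k) u i b
        = braid_factor m (u k) (u j) a b * (alpha k u i a * alpha k u i b)"
      by (rule step[OF ca cb])
    also have "\<dots> = braid_factor m (u k) (u j) b a * (alpha k u i b * alpha k u i a)"
      using braid_factor_commute[OF ca] IH by (rule arg_cong2[where f = "(*)"])
    also have "\<dots> = alpha (Suc k) u i b * alpha (Suc k) u i a"
      by (rule step[OF cb ca, symmetric])
    finally show ?thesis .
  qed
qed

theorem mainTheorem11:
  fixes u x :: "nat \<Rightarrow> 'a::ring_1" and mu1 mu2 :: 'a and n i :: nat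
  assumes n2: "n \<ge> 2"
    and mu1_central: "\<forall>a. mu1 * a = a * mu1"
    and mu2_central: "\<forall>a. mu2 * a = a * mu2"
    and x_central: "\<forall>j\<in>{1..n}. \<forall>a. x j * a = a * x j"
    and far_comm: "\<forall>k\<in>{1..<n}. \<forall>l\<in>{1..<n}. (k + 1 < l \<or> l + 1 < k) \<longrightarrow> u k * u l = u l * u k"
    and braid: "\<forall>k. 1 \<le> k \<and> k + 1 < n \<longrightarrow> u k * u (k + 1) * u k = u (k + 1) * u k * u (k + 1)"
    and quad: "\<forall>k\<in>{1..<n}. u k * u k = - (mu1 * u k)"
    and nil: "\<forall>k\<in>{1..<n}. mu2 * x k * x (k + 1) * u k = 0"
    and i: "i \<in> {1..<n}"
  shows "alpha n u i (x i) * alpha n u i (x (i + 1)) = alpha n u i (x (i + 1)) * alpha n u i (x i)"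
proof (rule alpha_commute)
  show "central (x i)" "central (x (i + 1))" "central mu1"
    using x_central mu1_central i by (auto simp: central_def)
  show "i \<le> n" using i by simp
  show "\<forall>l\<in>{i..<n}. u l * u l = - (mu1 * u l)"
    using quad i by auto
  show "\<forall>l\<in>{i..<n}. \<forall>l'\<in>{i..<n}. l + 1 < l' \<longrightarrow> u l' * u l = u l * u l'"
    using far_comm i by auto
  show "\<forall>l. i \<le> l \<and> Suc l < n \<longrightarrow> u l * u (Suc l) * u l = u (Suc l) * u l * u (Suc l)"
    using braid i by auto
qed

end
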